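(* Let $A$ be a hypermatrix of order $n$. Then $A$ is an alternating sign hypermatrix if and only if $\Xi(A)$ is a corner-sum hypermatrix of order $n$ satisfying, for all $i,j,k\in[n]$, $\Xi(A)_{i,j,k}-\Xi(A)_{i-1,j,k}-\Xi(A)_{i,j-1,k}+\Xi(A)_{i-1,j-1,k}\in\{0,1\}$, $\Xi(A)_{i,j,k}-\Xi(A)_{i-1,j,k}-\Xi(A)_{i,j,k-1}+\Xi(A)_{i-1,j,k-1}\in\{0,1\}$, and $\Xi(A)_{i,j,k}-\Xi(A)_{i,j-1,k}-\Xi(A)_{i,j,k-1}+\Xi(A)_{i,j-1,k-1}\in\{0,1\}$.
   Context: Let $[n]=\{1,\dots,n\}$ and $[0,n]=\{0,1,\dots,n\}$. A hypermatrix of order $n$ is an integer array $A=(A_{i,j,k})_{i,j,k\in[n]}$; its lines are the $n$-tuples obtained by fixing two of the three indices (rows, columns, vertical lines). An alternating sign hypermatrix (ASHM) of order $n$ is a hypermatrix with entries in $\{0,1,-1\}$ such that in every line the nonzero entries alternate in sign, beginning and ending with $+1$. For a hypermatrix $A$ of order $n$, $\Xi(A)$ is the array indexed by $[0,n]^3$ with $\Xi(A)_{i,j,k}=\sum_{a=1}^i\sum_{b=1}^j\sum_{c=1}^k A_{a,b,c}$. A corner-sum hypermatrix of order $n$ is an integer array $C$ indexed by $[0,n]^3$ such that for all $i,j\in[0,n]$: $C_{i,j,0}=C_{i,0,j}=C_{0,i,j}=0$, $C_{i,j,n}=C_{i,n,j}=C_{n,i,j}=ij$, and for all $k\in[n]$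 each of $C_{i,j,k}-C_{i,j,k-1}$, $C_{i,k,j}-C_{i,k-1,j}$, $C_{k,i,j}-C_{k-1,i,j}$ is an integer in $\{\max(0,i+j-n),\dots,\min(i,j)\}$. *)

theory Defs
  imports Main
begin

text \<open>A hypermatrix of order n is represented as a function
  nat \<Rightarrow> nat \<Rightarrow> nat \<Rightarrow> int; only the entries with indices in {1..n} matter.\<close>

type_synonym hypermatrix = "nat \<Rightarrow> nat \<Rightarrow> nat \<Rightarrow> int"

definition alt_sign_list :: "int list \<Rightarrow> bool" where
  "alt_sign_list xs \<longleftrightarrow> xs \<noteq> [] \<and> hd xs = 1 \<and> last xs = 1 \<and>
     (\<forall>i. Suc i < length xs \<longrightarrow> xs ! Suc i = - (xs ! i))"

definition alt_sign_line :: "nat \<Rightarrow> (nat \<Rightarrow> int) \<Rightarrow> bool" where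
  "alt_sign_line n f \<longleftrightarrow> (\<forall>a\<in>{1..n}. f a \<in> {0, 1, -1}) \<and>
     alt_sign_list (filter (\<lambda>x. x \<noteq> 0) (map f [1..<n+1]))"

definition is_ASHM :: "nat \<Rightarrow> hypermatrix \<Rightarrow> bool" where
  "is_ASHM n A \<longleftrightarrow>
     (\<forall>j\<in>{1..n}. \<forall>k\<in>{1..n}. alt_sign_line n (\<lambda>i. A i j k)) \<and>
     (\<forall>i\<in>{1..n}. \<forall>k\<in>{1..n}. alt_sign_line n (\<lambda>j. A i j k)) \<and>
     (\<forall>i\<in>{1..n}. \<forall>j\<in>{1..n}. alt_sign_line n (\<lambda>k. A i j k))"

definition Xi :: "hypermatrix \<Rightarrow> hypermatrix" where
  "Xi A i j k = (\<Sum>a=1..i. \<Sum>b=1..j. \<Sum>c=1..k. A a b c)"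

definition corner_sum :: "nat \<Rightarrow> hypermatrix \<Rightarrow> bool" where
  "corner_sum n C \<longleftrightarrow>
     (\<forall>i\<in>{0..n}. \<forall>j\<in>{0..n}.
        C i j 0 = 0 \<and> C i 0 j = 0 \<and> C 0 i j = 0 \<and>
        C i j n = int i * int j \<and> C i n j = int i * int j \<and> C n i j = int i * int j \<and>
        (\<forall>k\<in>{1..n}.
           C i j k - C i j (k-1) \<in> {max 0 (int i + int j - int n) .. min (int i) (int j)} \<and>
           C i k j - C i (k-1) j \<in> {max 0 (int i + int j - int n) .. min (int i) (int j)} \<and>
           C k i j - C (k-1) i j \<in> {max 0 (int i + int j - int n) .. min (int i) (int j)}))"

end

theory Submission
  imports Defs
begin

text \<open>Each mixed second difference of \<open>Xi A\<close> is a partial sum along a line of \<open>A\<close>, and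
  a line is alternating sign exactly when its partial sums lie in {0,1} and its total is 1.
  Hence the {0,1} conditions say that all partial line sums lie in {0,1}, while the faces
  \<open>Xi A i j n = i j\<close> (and their rotations) say that every line has total 1.  For an ASHM, a
  layer difference of \<open>Xi A\<close> is the sum over an i-by-j block of a plane slice whose rows and
  columns have partial sums in {0,1} and whose rows total 1, which pins it between
  max(0, i + j - n) and min(i, j).  A cyclic rotation of the coordinates reduces every
  statement to a single coordinate direction.\<close>

definition alternating_from_one :: "int list \<Rightarrow> bool" where
  "alternating_from_one ys \<longleftrightarrow> (\<forall>i<length ys. ys ! i = (-1) ^ i)"

lemma alternating_from_one_snoc:
  "alternating_from_one (ys @ [x]) \<longleftrightarrow> alternating_from_one ys \<and> x = (-1) ^ length ys"
  unfolding alternating_from_one_def by (auto simp: nth_append less_Suc_eq)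

lemma alt_sign_list_iff: "alt_sign_list ys \<longleftrightarrow> alternating_from_one ys \<and> odd (length ys)"
proof
  assume "alt_sign_list ys"
  then have ne: "ys \<noteq> []" and first: "ys ! 0 = 1" and last: "ys ! (length ys - 1) = 1"
    and step: "\<And>i. Suc i < length ys \<Longrightarrow> ys ! Suc i = - (ys ! i)"
    unfolding alt_sign_list_def by (auto simp: hd_conv_nth last_conv_nth)
  have alt: "ys ! i = (-1) ^ i" if "i < length ys" for i
    using that by (induction i) (simp_all add: first step)
  with ne last have "(-1::int) ^ (length ys - 1) = 1"
    by (metis diff_less length_greater_0_conv zero_less_one)
  then have "odd (length ys)"
    using ne by (cases "length ys") (auto simp: minus_one_power_iff split: if_splits)
  with alt show "alternating_from_one ys \<and> odd (length ys)"
    by (simp add: alternating_from_one_def)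
next
  assume "alternating_from_one ys \<and> odd (length ys)"
  moreover from this have "ys \<noteq> []"
    by auto
  ultimately show "alt_sign_list ys"
    by (auto simp: alternating_from_one_def alt_sign_list_def hd_conv_nth last_conv_nth)
qed

lemma parity_plus_in_01_iff:
  fixes x :: int
  shows "int (l mod 2) + x \<in> {0, 1} \<longleftrightarrow> x \<in> {0, 1, -1} \<and> (x \<noteq> 0 \<longrightarrow> x = (-1) ^ l)"
  by (cases "even l") (auto simp: even_iff_mod_2_eq_zero odd_iff_mod_2_eq_one)

definition nonzero_entries :: "nat \<Rightarrow> (nat \<Rightarrow> int) \<Rightarrow> int list" where
  "nonzero_entries n f = filter (\<lambda>x. x \<noteq> 0) (map f [1..<n+1])"

lemma nonzero_entries_0 [simp]: "nonzero_entries 0 f = []"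
  by (simp add: nonzero_entries_def)

lemma nonzero_entries_Suc [simp]:
  "nonzero_entries (Suc n) f = nonzero_entries n f @ (if f (Suc n) = 0 then [] else [f (Suc n)])"
  by (simp add: nonzero_entries_def)

text \<open>Once the partial sums stay in {0,1}, each nonzero entry toggles the partial sum.\<close>
lemma sum_eq_parity_of_nonzero_entries:
  fixes f :: "nat \<Rightarrow> int"
  assumes "\<forall>m\<in>{1..n}. (\<Sum>a=1..m. f a) \<in> {0, 1}"
  shows "(\<Sum>a=1..n. f a) = int (length (nonzero_entries n f) mod 2)"
  using assms
proof (induction n)
  case (Suc n)
  let ?l = "length (nonzero_entries n f)"
  have "(\<Sum>a=1..n. f a) = int (?l mod 2)"
    using Suc by auto
  moreover have "(\<Sum>a=1..n. f a) + f (Suc n) \<in> {0, 1}"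
    using Suc.prems[rule_format, of "Suc n"] by simp
  ultimately show ?case
    by (cases "even ?l") (auto simp: even_iff_mod_2_eq_zero odd_iff_mod_2_eq_one mod_Suc)
qed simp

lemma prefix_sums_01_iff_alternating:
  fixes f :: "nat \<Rightarrow> int"
  shows "(\<forall>m\<in>{1..n}. (\<Sum>a=1..m. f a) \<in> {0, 1}) \<longleftrightarrow>
    (\<forall>a\<in>{1..n}. f a \<in> {0, 1, -1}) \<and> alternating_from_one (nonzero_entries n f)"
proof (induction n)
  case (Suc n)
  let ?ys = "nonzero_entries n f" and ?x = "f (Suc n)"
  have "(\<forall>m\<in>{1..Suc n}. (\<Sum>a=1..m. f a) \<in> {0, 1}) \<longleftrightarrow>
      (\<forall>m\<in>{1..n}. (\<Sum>a=1..m. f a) \<in> {0, 1}) \<and> (\<Sum>a=1..n. f a) + ?x \<in> {0, 1}"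
    by (simp add: atLeastAtMostSuc_conv ac_simps)
  also have "\<dots> \<longleftrightarrow> (\<forall>m\<in>{1..n}. (\<Sum>a=1..m. f a) \<in> {0, 1}) \<and>
      ?x \<in> {0, 1, -1} \<and> (?x \<noteq> 0 \<longrightarrow> ?x = (-1) ^ length ?ys)"
    using sum_eq_parity_of_nonzero_entries parity_plus_in_01_iff by metis
  also have "\<dots> \<longleftrightarrow> (\<forall>a\<in>{1..Suc n}. f a \<in> {0, 1, -1}) \<and>
      alternating_from_one (nonzero_entries (Suc n) f)"
    using Suc.IH by (auto simp: le_Suc_eq alternating_from_one_snoc)
  finally show ?case .
qed (simp add: alternating_from_one_def)

lemma alt_sign_line_iff:
  "alt_sign_line n f \<longleftrightarrow> (\<forall>m\<in>{1..n}. (\<Sum>a=1..m. f a) \<in> {0, 1}) \<and> (\<Sum>a=1..n. f a) = 1"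
  using prefix_sums_01_iff_alternating[of n f] sum_eq_parity_of_nonzero_entries[of n f]
  unfolding alt_sign_line_def alt_sign_list_iff nonzero_entries_def by (auto simp: odd_iff_mod_2_eq_one)

lemma sum_01_bounds:
  fixes g :: "'a \<Rightarrow> int"
  assumes "\<forall>a\<in>I. g a \<in> {0, 1}"
  shows "0 \<le> sum g I" and "sum g I \<le> int (card I)"
proof -
  show "0 \<le> sum g I"
    using assms by (intro sum_nonneg) auto
  have "sum g I \<le> of_nat (card I) * 1"
    using assms by (intro sum_bounded_above) auto
  then show "sum g I \<le> int (card I)"
    by simp
qed

text \<open>Upper bounds: every row and every column of the block sums to 0 or 1.  Lower bound:
  the i full rows sum to i, and what lies outside the block is n - j column partial sums.\<close>
lemma block_sum_bounds:
  fixes M :: "nat \<Rightarrow> nat \<Rightarrow> int"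
  assumes rows: "\<forall>a\<in>{1..i}. (\<Sum>b=1..j. M a b) \<in> {0, 1}"
    and cols: "\<forall>b\<in>{1..n}. (\<Sum>a=1..i. M a b) \<in> {0, 1}"
    and row_totals: "\<forall>a\<in>{1..i}. (\<Sum>b=1..n. M a b) = 1"
    and "j \<le> n"
  shows "(\<Sum>a=1..i. \<Sum>b=1..j. M a b) \<in> {max 0 (int i + int j - int n) .. min (int i) (int j)}"
proof -
  define S where "S = (\<Sum>a=1..i. \<Sum>b=1..j. M a b)"
  have "0 \<le> S" "S \<le> int i"
    using sum_01_bounds[OF rows] by (simp_all add: S_def)
  moreover have "S = (\<Sum>b=1..j. \<Sum>a=1..i. M a b)"
    unfolding S_def by (rule sum.swap)
  then have "S \<le> int j"
    using sum_01_bounds(2)[of "{1..j}" "\<lambda>b. \<Sum>a=1..i. M a b"] cols \<open>j \<le> n\<close> by simp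
  moreover have "int i = S + (\<Sum>b=Suc j..n. \<Sum>a=1..i. M a b)"
  proof -
    have split: "{1..n} = {1..j} \<union> {Suc j..n}"
      using \<open>j \<le> n\<close> by auto
    have "int i = (\<Sum>a=1..i. \<Sum>b=1..n. M a b)"
      using row_totals by simp
    also have "\<dots> = S + (\<Sum>a=1..i. \<Sum>b=Suc j..n. M a b)"
      unfolding S_def split by (simp add: sum.union_disjoint sum.distrib)
    also have "(\<Sum>a=1..i. \<Sum>b=Suc j..n. M a b) = (\<Sum>b=Suc j..n. \<Sum>a=1..i. M a b)"
      by (rule sum.swap)
    finally show ?thesis .
  qed
  moreover have "(\<Sum>b=Suc j..n. \<Sum>a=1..i. M a b) \<le> int (n - j)"
    using sum_01_bounds(2)[of "{Suc j..n}" "\<lambda>b. \<Sum>a=1..i. M a b"] cols by simp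
  ultimately show ?thesis
    unfolding S_def[symmetric] using \<open>j \<le> n\<close> by simp
qed

lemma sum_atLeast1_atMost_diff:
  fixes g :: "nat \<Rightarrow> 'a::ab_group_add"
  assumes "1 \<le> i"
  shows "(\<Sum>a=1..i. g a) - (\<Sum>a=1..i-1. g a) = g i"
  using assms by (cases i) auto

definition rotate_indices :: "hypermatrix \<Rightarrow> hypermatrix" where
  "rotate_indices A a b c = A c a b"

lemma Xi_rotate_indices: "Xi (rotate_indices A) i j k = Xi A k i j"
proof -
  have "Xi (rotate_indices A) i j k = (\<Sum>a=1..i. \<Sum>c=1..k. \<Sum>b=1..j. A c a b)"
    unfolding Xi_def rotate_indices_def by (rule sum.cong[OF refl], rule sum.swap)
  also have "\<dots> = Xi A k i j"
    unfolding Xi_def by (rule sum.swap)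
  finally show ?thesis .
qed

lemma Xi_diff_first:
  "1 \<le> i \<Longrightarrow> Xi A i j k - Xi A (i-1) j k = (\<Sum>b=1..j. \<Sum>c=1..k. A i b c)"
  unfolding Xi_def by (rule sum_atLeast1_atMost_diff)

lemma Xi_diff_last:
  assumes "1 \<le> k"
  shows "Xi A i j k - Xi A i j (k-1) = (\<Sum>a=1..i. \<Sum>b=1..j. A a b k)"
  using Xi_diff_first[OF assms, of "rotate_indices (rotate_indices A)" i j]
  by (simp add: Xi_rotate_indices rotate_indices_def)

lemma Xi_mixed_diff_first_second:
  assumes "1 \<le> i" and "1 \<le> j"
  shows "Xi A i j k - Xi A (i-1) j k - Xi A i (j-1) k + Xi A (i-1) (j-1) k = (\<Sum>c=1..k. A i j c)"
proof -
  have "Xi A i j k - Xi A (i-1) j k - Xi A i (j-1) k + Xi A (i-1) (j-1) k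
      = (Xi A i j k - Xi A (i-1) j k) - (Xi A i (j-1) k - Xi A (i-1) (j-1) k)"
    by simp
  also have "\<dots> = (\<Sum>c=1..k. A i j c)"
    unfolding Xi_diff_first[OF \<open>1 \<le> i\<close>] by (rule sum_atLeast1_atMost_diff[OF \<open>1 \<le> j\<close>])
  finally show ?thesis .
qed

lemma Xi_mixed_diffs:
  assumes "1 \<le> i" and "1 \<le> j" and "1 \<le> k"
  shows "Xi A i j k - Xi A (i-1) j k - Xi A i (j-1) k + Xi A (i-1) (j-1) k = (\<Sum>c=1..k. A i j c)"
    and "Xi A i j k - Xi A (i-1) j k - Xi A i j (k-1) + Xi A (i-1) j (k-1) = (\<Sum>b=1..j. A i b k)"
    and "Xi A i j k - Xi A i (j-1) k - Xi A i j (k-1) + Xi A i (j-1) (k-1) = (\<Sum>a=1..i. A a j k)"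
proof -
  show "Xi A i j k - Xi A (i-1) j k - Xi A i (j-1) k + Xi A (i-1) (j-1) k = (\<Sum>c=1..k. A i j c)"
    using Xi_mixed_diff_first_second[OF assms(1,2)] .
  show "Xi A i j k - Xi A (i-1) j k - Xi A i j (k-1) + Xi A (i-1) j (k-1) = (\<Sum>b=1..j. A i b k)"
    using Xi_mixed_diff_first_second[OF assms(3,1), of "rotate_indices (rotate_indices A)" j]
    by (simp add: Xi_rotate_indices rotate_indices_def)
  show "Xi A i j k - Xi A i (j-1) k - Xi A i j (k-1) + Xi A i (j-1) (k-1) = (\<Sum>a=1..i. A a j k)"
    using Xi_mixed_diff_first_second[OF assms(2,3), of "rotate_indices A" i]
    by (simp add: Xi_rotate_indices rotate_indices_def)
qed

lemma is_ASHM_iff_line_sums: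
  "is_ASHM n A \<longleftrightarrow>
    (\<forall>i\<in>{1..n}. \<forall>j\<in>{1..n}. \<forall>k\<in>{1..n}.
       (\<Sum>c=1..k. A i j c) \<in> {0, 1} \<and> (\<Sum>b=1..j. A i b k) \<in> {0, 1} \<and> (\<Sum>a=1..i. A a j k) \<in> {0, 1}) \<and>
    (\<forall>i\<in>{1..n}. \<forall>j\<in>{1..n}.
       (\<Sum>c=1..n. A i j c) = 1 \<and> (\<Sum>b=1..n. A i b j) = 1 \<and> (\<Sum>a=1..n. A a i j) = 1)"
  unfolding is_ASHM_def alt_sign_line_iff by blast

lemma is_ASHM_rotate_indices: "is_ASHM n A \<Longrightarrow> is_ASHM n (rotate_indices A)"
  unfolding is_ASHM_def rotate_indices_def by blast

lemma Xi_top_face: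
  assumes "\<forall>a\<in>{1..n}. \<forall>b\<in>{1..n}. (\<Sum>c=1..n. A a b c) = 1" and "i \<le> n" and "j \<le> n"
  shows "Xi A i j n = int i * int j"
proof -
  have "Xi A i j n = (\<Sum>a=1..i. \<Sum>b=1..j. (1::int))"
    unfolding Xi_def using assms by (intro sum.cong refl) auto
  then show ?thesis
    by simp
qed

lemma Xi_layer_diff_bounds:
  assumes "is_ASHM n A" and "i \<le> n" and "j \<le> n" and "k \<in> {1..n}"
  shows "Xi A i j k - Xi A i j (k-1) \<in> {max 0 (int i + int j - int n) .. min (int i) (int j)}"
proof -
  note lines = assms(1)[unfolded is_ASHM_iff_line_sums]
  have "(\<Sum>a=1..i. \<Sum>b=1..j. A a b k) \<in> {max 0 (int i + int j - int n) .. min (int i) (int j)}"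
  proof (rule block_sum_bounds)
    show "\<forall>a\<in>{1..i}. (\<Sum>b=1..j. A a b k) \<in> {0, 1}"
      using lines assms(2-4) by (cases "j = 0") auto
    show "\<forall>b\<in>{1..n}. (\<Sum>a=1..i. A a b k) \<in> {0, 1}"
      using lines assms(2-4) by (cases "i = 0") auto
    show "\<forall>a\<in>{1..i}. (\<Sum>b=1..n. A a b k) = 1"
      using lines assms(2-4) by auto
  qed fact
  moreover have "1 \<le> k"
    using assms(4) by simp
  ultimately show ?thesis
    by (simp only: Xi_diff_last)
qed

lemma corner_sum_Xi:
  assumes "is_ASHM n A"
  shows "corner_sum n (Xi A)"
proof -
  let ?R = rotate_indices
  have rotated: "is_ASHM n (?R A)" "is_ASHM n (?R (?R A))"
    using assms by (simp_all add: is_ASHM_rotate_indices)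
  have top: "Xi B i j n = int i * int j" if "is_ASHM n B" "i \<le> n" "j \<le> n" for B i j
    using that by (intro Xi_top_face) (auto simp: is_ASHM_iff_line_sums)
  show ?thesis
    unfolding corner_sum_def
  proof (intro ballI conjI)
    fix i j assume "i \<in> {0..n}" "j \<in> {0..n}"
    then have "i \<le> n" "j \<le> n"
      by simp_all
    show "Xi A i j 0 = 0" "Xi A i 0 j = 0" "Xi A 0 i j = 0"
      by (simp_all add: Xi_def)
    show "Xi A i j n = int i * int j"
      using top[OF assms \<open>i \<le> n\<close> \<open>j \<le> n\<close>] .
    show "Xi A i n j = int i * int j"
      using top[OF rotated(2) \<open>j \<le> n\<close> \<open>i \<le> n\<close>] by (simp add: Xi_rotate_indices)
    show "Xi A n i j = int i * int j"
      using top[OF rotated(1) \<open>i \<le> n\<close> \<open>j \<le> n\<close>] by (simp add: Xi_rotate_indices)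
    fix k assume "k \<in> {1..n}"
    show "Xi A i j k - Xi A i j (k-1) \<in> {max 0 (int i + int j - int n) .. min (int i) (int j)}"
      using Xi_layer_diff_bounds[OF assms \<open>i \<le> n\<close> \<open>j \<le> n\<close> \<open>k \<in> {1..n}\<close>] .
    show "Xi A i k j - Xi A i (k-1) j \<in> {max 0 (int i + int j - int n) .. min (int i) (int j)}"
      using Xi_layer_diff_bounds[OF rotated(2) \<open>j \<le> n\<close> \<open>i \<le> n\<close> \<open>k \<in> {1..n}\<close>]
      by (simp add: Xi_rotate_indices ac_simps)
    show "Xi A k i j - Xi A (k-1) i j \<in> {max 0 (int i + int j - int n) .. min (int i) (int j)}"
      using Xi_layer_diff_bounds[OF rotated(1) \<open>i \<le> n\<close> \<open>j \<le> n\<close> \<open>k \<in> {1..n}\<close>]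
      by (simp add: Xi_rotate_indices)
  qed
qed

lemma line_totals_of_corner_sum_Xi:
  assumes "corner_sum n (Xi A)" and "i \<in> {1..n}" and "j \<in> {1..n}"
  shows "(\<Sum>c=1..n. A i j c) = 1" and "(\<Sum>b=1..n. A i b j) = 1" and "(\<Sum>a=1..n. A a i j) = 1"
proof -
  have faces: "Xi A a b n = int a * int b" "Xi A a n b = int a * int b" "Xi A n a b = int a * int b"
    if "a \<le> n" "b \<le> n" for a b
    using assms(1) that unfolding corner_sum_def by auto
  have unit: "int i * int j - int (i-1) * int j - int i * int (j-1) + int (i-1) * int (j-1) = 1"
    using assms(2,3) by (simp add: algebra_simps)
  have le: "i \<le> n" "j \<le> n" "i - 1 \<le> n" "j - 1 \<le> n" "1 \<le> i" "1 \<le> j" "1 \<le> n"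
    using assms(2,3) by auto
  show "(\<Sum>c=1..n. A i j c) = 1"
    using Xi_mixed_diffs(1)[of i j n A] le unit by (simp add: faces)
  show "(\<Sum>b=1..n. A i b j) = 1"
    using Xi_mixed_diffs(2)[of i n j A] le unit by (simp add: faces)
  show "(\<Sum>a=1..n. A a i j) = 1"
    using Xi_mixed_diffs(3)[of n i j A] le unit by (simp add: faces)
qed

lemma Xi_mixed_diffs_01_iff_prefix_sums:
  "(\<forall>i\<in>{1..n}. \<forall>j\<in>{1..n}. \<forall>k\<in>{1..n}.
      Xi A i j k - Xi A (i-1) j k - Xi A i (j-1) k + Xi A (i-1) (j-1) k \<in> {0, 1} \<and>
      Xi A i j k - Xi A (i-1) j k - Xi A i j (k-1) + Xi A (i-1) j (k-1) \<in> {0, 1} \<and>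
      Xi A i j k - Xi A i (j-1) k - Xi A i j (k-1) + Xi A i (j-1) (k-1) \<in> {0, 1}) \<longleftrightarrow>
   (\<forall>i\<in>{1..n}. \<forall>j\<in>{1..n}. \<forall>k\<in>{1..n}.
      (\<Sum>c=1..k. A i j c) \<in> {0, 1} \<and> (\<Sum>b=1..j. A i b k) \<in> {0, 1} \<and> (\<Sum>a=1..i. A a j k) \<in> {0, 1})"
  by (intro ball_cong[OF refl]) (simp only: atLeastAtMost_iff Xi_mixed_diffs)

theorem mainTheorem4:
  fixes n :: nat and A :: hypermatrix
  shows "is_ASHM n A \<longleftrightarrow>
    (corner_sum n (Xi A) \<and>
     (\<forall>i\<in>{1..n}. \<forall>j\<in>{1..n}. \<forall>k\<in>{1..n}.
        Xi A i j k - Xi A (i-1) j k - Xi A i (j-1) k + Xi A (i-1) (j-1) k \<in> {0, 1} \<and>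
        Xi A i j k - Xi A (i-1) j k - Xi A i j (k-1) + Xi A (i-1) j (k-1) \<in> {0, 1} \<and>
        Xi A i j k - Xi A i (j-1) k - Xi A i j (k-1) + Xi A i (j-1) (k-1) \<in> {0, 1}))"
  unfolding Xi_mixed_diffs_01_iff_prefix_sums
  using corner_sum_Xi[of n A] line_totals_of_corner_sum_Xi[of n A] is_ASHM_iff_line_sums[of n A]
  by blast

end
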